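(* Let $G$ be a group, $\varphi\colon A\to B$ an isomorphism between subgroups of $G$, $G^*=\langle G,t\mid t^{-1}at=\varphi(a),\ a\in A\rangle$ the HNN extension, and $H=H(G,\varphi)$. Then $H$ is the largest subgroup of $G$ with $\varphi(H)=H$, and, as subgroups of $G^*$, $H=\bigcap_{i\in\mathbb{Z}}t^{-i}Gt^{i}$. Moreover $H=\{g\in G:\ \varphi^j(g)\text{ is defined for all } j\in\mathbb{Z}\}$. If $A$ is finite, then there exists an integer $r\ge 0$ such that for every $s\ge r$ we have $H=\{g\in G:\ \varphi^j(g)\text{ is defined for } j=0,\dots,s\}$.
   Context: The core $H(G,\varphi)$ is $\bigcap_k H_k$ where $H_0=A\cap B$ and $H_{k+1}=\varphi^{-1}(H_k)\cap H_k\cap\varphi(H_k)$ (with $\varphi^{-1}(H_k)=\{a\in A:\varphi(a)\in H_k\}$). For $g\in G$ and $n\in\mathbb{N}$, "$\varphi^n(g)$ is defined" means $g$ lies in the domain of the $n$-fold composite of $\varphi$ regarded as a partially defined map $G\to G$, and "$\varphi^{-n}(g)$ is defined" means $g$ lies in the domain of the $n$-fold composite of $\varphi^{-1}\colon B\to A$ regarded as a partial map; $\varphi^0(g)$ is always defined. $G$ is regarded as a subgroup of $G^*$. *)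

theory Defs
  imports "HOL-Algebra.Algebra"
begin

text \<open>phi is a map A -> B, represented as a total HOL function whose values
  outside A are irrelevant.\<close>

fun hnn_core_seq :: "'g set \<Rightarrow> 'g set \<Rightarrow> ('g \<Rightarrow> 'g) \<Rightarrow> nat \<Rightarrow> 'g set" where
  "hnn_core_seq A B phi 0 = A \<inter> B"
| "hnn_core_seq A B phi (Suc k) =
     {a \<in> A. phi a \<in> hnn_core_seq A B phi k} \<inter> hnn_core_seq A B phi k
       \<inter> phi ` hnn_core_seq A B phi k"

definition hnn_core :: "'g set \<Rightarrow> 'g set \<Rightarrow> ('g \<Rightarrow> 'g) \<Rightarrow> 'g set" where
  "hnn_core A B phi = (\<Inter>k. hnn_core_seq A B phi k)"

text \<open>phi_pos_defined A phi n g: g lies in the domain of the n-fold composite of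
  phi : A -> B regarded as a partial map G -> G.\<close>
fun phi_pos_defined :: "'g set \<Rightarrow> ('g \<Rightarrow> 'g) \<Rightarrow> nat \<Rightarrow> 'g \<Rightarrow> bool" where
  "phi_pos_defined A phi 0 g = True"
| "phi_pos_defined A phi (Suc n) g = (g \<in> A \<and> phi_pos_defined A phi n (phi g))"

text \<open>phi_neg_defined A B phi n g: g lies in the domain of the n-fold composite
  of phi^-1 : B -> A regarded as a partial map.\<close>
fun phi_neg_defined :: "'g set \<Rightarrow> 'g set \<Rightarrow> ('g \<Rightarrow> 'g) \<Rightarrow> nat \<Rightarrow> 'g \<Rightarrow> bool" where
  "phi_neg_defined A B phi 0 g = True"
| "phi_neg_defined A B phi (Suc n) g =
     (g \<in> B \<and> phi_neg_defined A B phi n (inv_into A phi g))"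

definition phi_defined :: "'g set \<Rightarrow> 'g set \<Rightarrow> ('g \<Rightarrow> 'g) \<Rightarrow> int \<Rightarrow> 'g \<Rightarrow> bool" where
  "phi_defined A B phi j g =
     (if 0 \<le> j then phi_pos_defined A phi (nat j) g
      else phi_neg_defined A B phi (nat (- j)) g)"

text \<open>Defined by its presentation: words in the letters g (g in G), t, t^-1,
  modulo the congruence generated by the multiplication table of G, the
  free-group relations for t, and the HNN relations t^-1 a t = phi(a).\<close>

datatype 'g hnn_letter = Gen 'g | T | Tinv

definition hnn_words :: "('g, 'b) monoid_scheme \<Rightarrow> 'g hnn_letter list set" where
  "hnn_words G = {w. \<forall>x \<in> set w. \<forall>g. x = Gen g \<longrightarrow> g \<in> carrier G}"

inductive hnn_eq :: "('g, 'b) monoid_scheme \<Rightarrow> 'g set \<Rightarrow> ('g \<Rightarrow> 'g)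
    \<Rightarrow> 'g hnn_letter list \<Rightarrow> 'g hnn_letter list \<Rightarrow> bool"
  for G A phi where
  hnn_refl: "w \<in> hnn_words G \<Longrightarrow> hnn_eq G A phi w w"
| hnn_sym: "hnn_eq G A phi u v \<Longrightarrow> hnn_eq G A phi v u"
| hnn_trans: "hnn_eq G A phi u v \<Longrightarrow> hnn_eq G A phi v w \<Longrightarrow> hnn_eq G A phi u w"
| hnn_ctxt: "hnn_eq G A phi u v \<Longrightarrow> p \<in> hnn_words G \<Longrightarrow> q \<in> hnn_words G
    \<Longrightarrow> hnn_eq G A phi (p @ u @ q) (p @ v @ q)"
| hnn_mult: "g \<in> carrier G \<Longrightarrow> h \<in> carrier G
    \<Longrightarrow> hnn_eq G A phi [Gen g, Gen h] [Gen (g \<otimes>\<^bsub>G\<^esub> h)]"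
| hnn_one: "hnn_eq G A phi [Gen \<one>\<^bsub>G\<^esub>] []"
| hnn_t_tinv: "hnn_eq G A phi [T, Tinv] []"
| hnn_tinv_t: "hnn_eq G A phi [Tinv, T] []"
| hnn_rel: "a \<in> A \<Longrightarrow> hnn_eq G A phi [Tinv, Gen a, T] [Gen (phi a)]"

definition hnn_class :: "('g, 'b) monoid_scheme \<Rightarrow> 'g set \<Rightarrow> ('g \<Rightarrow> 'g)
    \<Rightarrow> 'g hnn_letter list \<Rightarrow> 'g hnn_letter list set" where
  "hnn_class G A phi w = {v. hnn_eq G A phi w v}"

definition hnn_mult :: "('g, 'b) monoid_scheme \<Rightarrow> 'g set \<Rightarrow> ('g \<Rightarrow> 'g)
    \<Rightarrow> 'g hnn_letter list set \<Rightarrow> 'g hnn_letter list set \<Rightarrow> 'g hnn_letter list set" where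
  "hnn_mult G A phi U V = hnn_class G A phi ((SOME u. u \<in> U) @ (SOME v. v \<in> V))"

definition HNN :: "('g, 'b) monoid_scheme \<Rightarrow> 'g set \<Rightarrow> ('g \<Rightarrow> 'g)
    \<Rightarrow> 'g hnn_letter list set monoid" where
  "HNN G A phi =
    \<lparr>carrier = hnn_class G A phi ` hnn_words G,
     monoid.mult = hnn_mult G A phi,
     one = hnn_class G A phi []\<rparr>"

definition hnn_emb :: "('g, 'b) monoid_scheme \<Rightarrow> 'g set \<Rightarrow> ('g \<Rightarrow> 'g)
    \<Rightarrow> 'g \<Rightarrow> 'g hnn_letter list set" where
  "hnn_emb G A phi g = hnn_class G A phi [Gen g]"

definition hnn_t :: "('g, 'b) monoid_scheme \<Rightarrow> 'g set \<Rightarrow> ('g \<Rightarrow> 'g)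
    \<Rightarrow> 'g hnn_letter list set" where
  "hnn_t G A phi = hnn_class G A phi [T]"

end

theory Submission
  imports Defs
begin

(* The core is the set of g all of whose iterates phi^j g, j \<in> \<int>, are defined.  This set is a
   subgroup closed under phi and phi^-1, it contains every phi-invariant subset of A, and its n-th
   approximation agrees with H_(n-1).  If A is finite, an element whose first |A| + 1 forward iterates
   are defined has a periodic phi-orbit inside A, hence lies in the core.  In G*, t^i g t^-i equals the
   iterate phi^-i g whenever it is defined; conversely, if t x t^-1 (resp. t^-1 x t) lies in G for some
   x in G, then x lies in B (resp. A).  This is the simplest case of Britton's lemma and follows by
   letting G* act on Britton normal forms. *)

lemma phi_pos_defined_iff: "phi_pos_defined D f n g \<longleftrightarrow> (\<forall>m<n. (f ^^ m) g \<in> D)"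
proof (induction n arbitrary: g)
  case 0
  then show ?case by simp
next
  case (Suc n)
  then show ?case by (simp add: All_less_Suc2 funpow_Suc_right del: funpow.simps)
qed

lemma phi_pos_defined_mono: "phi_pos_defined D f n g \<Longrightarrow> m \<le> n \<Longrightarrow> phi_pos_defined D f m g"
  by (simp add: phi_pos_defined_iff)

lemma phi_neg_defined_eq_pos: "phi_neg_defined A B phi = phi_pos_defined B (inv_into A phi)"
proof (intro ext)
  show "phi_neg_defined A B phi n g = phi_pos_defined B (inv_into A phi) n g" for n g
    by (induction n arbitrary: g) simp_all
qed

lemma funpow_cancel_on:
  assumes "inj_on f D" "phi_pos_defined D f n x" "phi_pos_defined D f n y" "(f ^^ n) x = (f ^^ n) y"
  shows "x = y"
  using assms(2-)
proof (induction n arbitrary: x y)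
  case 0
  then show ?case by simp
next
  case (Suc n)
  then have "f x = f y" by (simp add: funpow_Suc_right del: funpow.simps)
  with Suc.prems assms(1) show ?case by (simp add: inj_on_def)
qed

lemma funpow_period_on_finite:
  assumes "finite D" "inj_on f D" "phi_pos_defined D f (Suc (card D)) g"
  shows "\<exists>d. 0 < d \<and> d \<le> card D \<and> (f ^^ d) g = g"
proof -
  have "(\<lambda>m. (f ^^ m) g) ` {..card D} \<subseteq> D"
    using assms(3) by (auto simp: phi_pos_defined_iff)
  then have "\<not> inj_on (\<lambda>m. (f ^^ m) g) {..card D}"
    using card_inj_on_le[OF _ _ assms(1)] by fastforce
  then obtain i j where ij: "i < j" "j \<le> card D" "(f ^^ i) g = (f ^^ j) g"
    unfolding inj_on_def by (metis atMost_iff linorder_neqE_nat)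
  define d where "d = j - i"
  have shift: "(f ^^ m) ((f ^^ d) g) = (f ^^ (m + d)) g" for m
    by (simp add: funpow_add)
  have j: "j = i + d"
    using ij by (simp add: d_def)
  have "(f ^^ i) ((f ^^ d) g) = (f ^^ i) g"
    using ij by (simp add: shift j)
  moreover have "phi_pos_defined D f i ((f ^^ d) g)" "phi_pos_defined D f i g"
    using assms(3) ij by (auto simp: phi_pos_defined_iff shift j)
  ultimately have "(f ^^ d) g = g"
    using funpow_cancel_on[OF assms(2)] by blast
  moreover have "0 < d" "d \<le> card D"
    using ij by (simp_all add: d_def)
  ultimately show ?thesis
    by blast
qed

lemma funpow_mod_period: "(f ^^ d) g = g \<Longrightarrow> (f ^^ m) g = (f ^^ (m mod d)) g"
proof -
  assume per: "(f ^^ d) g = g"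
  have "((f ^^ d) ^^ q) g = g" for q
    using per by (induction q) auto
  then have "(f ^^ (m mod d)) (((f ^^ d) ^^ (m div d)) g) = (f ^^ (m mod d)) g" by simp
  then show ?thesis
    by (metis comp_apply funpow_add funpow_mult mod_mult_div_eq)
qed

context group
begin

text \<open>The trivial coset is represented by \<open>\<one>\<close>, so a representative \<open>\<one>\<close> signals \<open>g \<in> H\<close>.\<close>

definition coset_rep :: "'a set \<Rightarrow> 'a \<Rightarrow> 'a" where
  "coset_rep H g = (if H #> g = H then \<one> else (SOME r. r \<in> H #> g))"

lemma coset_rep_in:
  assumes H: "subgroup H G" and g: "g \<in> carrier G"
  shows "\<exists>h\<in>H. coset_rep H g = h \<otimes> g"
proof (cases "H #> g = H")
  case True
  then have "inv g \<in> H"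
    using rcos_self[OF g H] subgroup.m_inv_closed[OF H] by simp
  moreover have "coset_rep H g = inv g \<otimes> g"
    using True g by (simp add: coset_rep_def)
  ultimately show ?thesis by blast
next
  case False
  have "(SOME r. r \<in> H #> g) \<in> H #> g"
    by (rule someI, rule rcos_self[OF g H])
  with False show ?thesis
    by (auto simp: coset_rep_def r_coset_def)
qed

lemma coset_rep_carrier: "subgroup H G \<Longrightarrow> g \<in> carrier G \<Longrightarrow> coset_rep H g \<in> carrier G"
  using coset_rep_in subgroup.mem_carrier by fastforce

lemma coset_rep_mult_left:
  assumes H: "subgroup H G" and h: "h \<in> H" and g: "g \<in> carrier G"
  shows "coset_rep H (h \<otimes> g) = coset_rep H g"
proof -
  have "H #> (h \<otimes> g) = (H #> h) #> g"
    using coset_mult_assoc[OF subgroup.subset[OF H] subgroup.mem_carrier[OF H h] g] by simp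
  also have "H #> h = H"
    by (rule subgroup.rcos_const[OF H is_group h])
  finally show ?thesis
    by (simp add: coset_rep_def)
qed

lemma coset_rep_eq_one_iff:
  assumes H: "subgroup H G" and g: "g \<in> carrier G"
  shows "coset_rep H g = \<one> \<longleftrightarrow> g \<in> H"
proof
  assume "g \<in> H"
  then show "coset_rep H g = \<one>"
    by (simp add: coset_rep_def subgroup.rcos_const[OF H is_group])
next
  assume "coset_rep H g = \<one>"
  then obtain h where h: "h \<in> H" "\<one> = h \<otimes> g"
    using coset_rep_in[OF H g] by auto
  then have "g = inv h"
    using g subgroup.mem_carrier[OF H h(1)] inv_comm inv_equality by metis
  then show "g \<in> H"
    using subgroup.m_inv_closed[OF H h(1)] by simp
qed

lemma coset_rep_idem:
  "subgroup H G \<Longrightarrow> g \<in> carrier G \<Longrightarrow> coset_rep H (coset_rep H g) = coset_rep H g"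
  using coset_rep_in coset_rep_mult_left by metis

lemma coset_rep_factor:
  assumes H: "subgroup H G" and g: "g \<in> carrier G"
  shows "g \<otimes> inv (coset_rep H g) \<in> H"
proof -
  obtain h where h: "h \<in> H" "coset_rep H g = h \<otimes> g"
    using coset_rep_in[OF H g] by blast
  have "g \<otimes> inv (h \<otimes> g) = inv h"
    using g subgroup.mem_carrier[OF H h(1)] by (simp add: inv_mult_group m_assoc[symmetric])
  then show ?thesis
    using h subgroup.m_inv_closed[OF H] by simp
qed

lemma conj_int_pow_Suc:
  fixes i :: int
  assumes "t \<in> carrier G" "y \<in> carrier G"
  shows "t [^] (i + 1) \<otimes> y \<otimes> t [^] (- (i + 1)) = t \<otimes> (t [^] i \<otimes> y \<otimes> t [^] (- i)) \<otimes> inv t"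
proof -
  have "t [^] (i + 1) = t \<otimes> t [^] i" "t [^] (- (i + 1)) = t [^] (- i) \<otimes> inv t"
    using assms(1) int_pow_mult[of t 1 i] int_pow_mult[of t "- i" "- 1"] int_pow_neg[of t 1]
    by (simp_all add: add.commute)
  then show ?thesis
    using assms by (simp add: m_assoc)
qed

lemma conj_int_pow_pred:
  fixes i :: int
  assumes "t \<in> carrier G" "y \<in> carrier G"
  shows "t [^] (i - 1) \<otimes> y \<otimes> t [^] (- (i - 1)) = inv t \<otimes> (t [^] i \<otimes> y \<otimes> t [^] (- i)) \<otimes> t"
proof -
  have "t [^] (i - 1) = inv t \<otimes> t [^] i" "t [^] (- (i - 1)) = t [^] (- i) \<otimes> t"
    using assms(1) int_pow_mult[of t "- 1" i] int_pow_mult[of t "- i" 1] int_pow_neg[of t 1]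
    by (simp_all add: add.commute)
  then show ?thesis
    using assms by (simp add: m_assoc)
qed

lemma mem_conj_int_pow_iff:
  fixes i :: int
  assumes "t \<in> carrier G" "y \<in> carrier G" "S \<subseteq> carrier G"
  shows "y \<in> {t [^] (- i) \<otimes> x \<otimes> t [^] i | x. x \<in> S} \<longleftrightarrow> t [^] i \<otimes> y \<otimes> t [^] (- i) \<in> S"
proof -
  define P where "P = t [^] i"
  have P: "P \<in> carrier G" and inverse: "t [^] (- i) = inv P"
    using assms(1) by (simp_all add: P_def int_pow_neg)
  have iff: "y = inv P \<otimes> x \<otimes> P \<longleftrightarrow> P \<otimes> y \<otimes> inv P = x" if x: "x \<in> carrier G" for x
  proof -
    have "y = inv P \<otimes> x \<otimes> P \<longleftrightarrow> x \<otimes> P = P \<otimes> y"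
      using inv_solve_left[of y P "x \<otimes> P"] x P assms(2) by (simp add: m_assoc)
    also have "\<dots> \<longleftrightarrow> P \<otimes> y \<otimes> inv P = x"
      using inv_solve_right'[of x "P \<otimes> y" P] x P assms(2) by auto
    finally show ?thesis .
  qed
  show ?thesis
    unfolding inverse P_def[symmetric]
  proof
    assume "y \<in> {inv P \<otimes> x \<otimes> P | x. x \<in> S}"
    then obtain x where "x \<in> S" "y = inv P \<otimes> x \<otimes> P"
      by blast
    then show "P \<otimes> y \<otimes> inv P \<in> S"
      using iff[of x] assms(3) by auto
  next
    assume S: "P \<otimes> y \<otimes> inv P \<in> S"
    then have "y = inv P \<otimes> (P \<otimes> y \<otimes> inv P) \<otimes> P"
      using iff[of "P \<otimes> y \<otimes> inv P"] assms(3) by auto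
    with S show "y \<in> {inv P \<otimes> x \<otimes> P | x. x \<in> S}"
      by blast
  qed
qed

end

locale hnn_setting = group G for G :: "'g monoid" (structure) +
  fixes A B :: "'g set" and phi :: "'g \<Rightarrow> 'g"
  assumes subgroup_A: "subgroup A G" and subgroup_B: "subgroup B G"
    and phi_hom: "phi \<in> hom (G\<lparr>carrier := A\<rparr>) (G\<lparr>carrier := B\<rparr>)"
    and phi_bij: "bij_betw phi A B"
begin

text \<open>Sides: \<open>True\<close> stands for the stable letter \<open>t\<close>, with \<open>t b t\<inverse> = phi\<inverse> b\<close> for \<open>b \<in> B\<close>,
  and \<open>False\<close> for \<open>t\<inverse>\<close>, with \<open>t\<inverse> a t = phi a\<close> for \<open>a \<in> A\<close>.\<close>

definition assoc :: "bool \<Rightarrow> 'g set" where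
  "assoc e = (if e then B else A)"

definition assoc_iso :: "bool \<Rightarrow> 'g \<Rightarrow> 'g" where
  "assoc_iso e = (if e then inv_into A phi else phi)"

lemma assoc_subgroup: "subgroup (assoc e) G"
  by (simp add: assoc_def subgroup_A subgroup_B)

lemma assoc_subset_carrier: "h \<in> assoc e \<Longrightarrow> h \<in> carrier G"
  using subgroup.subset[OF assoc_subgroup] by blast

lemma assoc_iso_iso: "assoc_iso e \<in> iso (G\<lparr>carrier := assoc e\<rparr>) (G\<lparr>carrier := assoc (\<not> e)\<rparr>)"
proof (cases e)
  case True
  have "phi \<in> iso (G\<lparr>carrier := A\<rparr>) (G\<lparr>carrier := B\<rparr>)"
    using phi_hom phi_bij by (simp add: iso_def)
  then show ?thesis
    using group.iso_set_sym[OF subgroup_imp_group[OF subgroup_A]] True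
    by (simp add: assoc_def assoc_iso_def)
next
  case False
  then show ?thesis
    using phi_hom phi_bij by (simp add: iso_def assoc_def assoc_iso_def)
qed

lemma assoc_iso_group_hom:
  "group_hom (G\<lparr>carrier := assoc e\<rparr>) (G\<lparr>carrier := assoc (\<not> e)\<rparr>) (assoc_iso e)"
  using assoc_iso_iso[of e] subgroup_imp_group[OF assoc_subgroup]
  by (simp add: group_hom_def group_hom_axioms_def iso_def)

lemma assoc_iso_in: "h \<in> assoc e \<Longrightarrow> assoc_iso e h \<in> assoc (\<not> e)"
  using group_hom.hom_closed[OF assoc_iso_group_hom] by fastforce

lemma assoc_iso_cancel: "h \<in> assoc e \<Longrightarrow> assoc_iso (\<not> e) (assoc_iso e h) = h"
  using phi_bij by (cases e) (auto simp: assoc_def assoc_iso_def bij_betw_def f_inv_into_f)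

lemma assoc_iso_mult:
  "h \<in> assoc e \<Longrightarrow> h' \<in> assoc e \<Longrightarrow> assoc_iso e (h \<otimes> h') = assoc_iso e h \<otimes> assoc_iso e h'"
  using group_hom.hom_mult[OF assoc_iso_group_hom] by fastforce

lemma assoc_iso_inv: "h \<in> assoc e \<Longrightarrow> assoc_iso e (inv h) = inv (assoc_iso e h)"
  using group_hom.hom_inv[OF assoc_iso_group_hom] assoc_iso_in assoc_subgroup by fastforce

lemma assoc_iso_one: "assoc_iso e \<one> = \<one>"
  using group_hom.hom_one[OF assoc_iso_group_hom] by simp

abbreviation iter_defined :: "bool \<Rightarrow> nat \<Rightarrow> 'g \<Rightarrow> bool" where
  "iter_defined e \<equiv> phi_pos_defined (assoc e) (assoc_iso e)"

lemma iter_defined_False: "iter_defined False = phi_pos_defined A phi"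
  by (simp add: assoc_def assoc_iso_def)

lemma iter_defined_True: "iter_defined True = phi_neg_defined A B phi"
  by (simp add: assoc_def assoc_iso_def phi_neg_defined_eq_pos)

definition level :: "nat \<Rightarrow> 'g set" where
  "level n = {g. \<forall>e. iter_defined e n g}"

definition core :: "'g set" where
  "core = (\<Inter>n. level n)"

lemma level_mono: "m \<le> n \<Longrightarrow> level n \<subseteq> level m"
  by (auto simp: level_def phi_pos_defined_iff)

lemma level_Suc_iff:
  "g \<in> level (Suc n) \<longleftrightarrow> (\<forall>e. g \<in> assoc e \<and> assoc_iso e g \<in> level n)"
proof
  assume g: "g \<in> level (Suc n)"
  show "\<forall>e. g \<in> assoc e \<and> assoc_iso e g \<in> level n"
  proof
    fix e
    have ge: "g \<in> assoc e" "iter_defined e n (assoc_iso e g)"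
      using g by (simp_all add: level_def)
    have "iter_defined (\<not> e) n g"
      using g phi_pos_defined_mono[of _ _ "Suc n" g n] by (simp add: level_def)
    then have "iter_defined (\<not> e) (Suc n) (assoc_iso e g)"
      using assoc_iso_in[OF ge(1)] assoc_iso_cancel[OF ge(1)] by simp
    then have other: "iter_defined (\<not> e) n (assoc_iso e g)"
      by (rule phi_pos_defined_mono) simp
    have "iter_defined e' n (assoc_iso e g)" for e'
    proof (cases "e' = e")
      case True
      with ge(2) show ?thesis by simp
    next
      case False
      then have "e' = (\<not> e)" by blast
      with other show ?thesis by simp
    qed
    with ge(1) show "g \<in> assoc e \<and> assoc_iso e g \<in> level n"
      unfolding level_def by blast
  qed
qed (simp add: level_def)

lemma core_subset_assoc: "core \<subseteq> assoc e"
  using level_Suc_iff[of _ 0] by (auto simp: core_def)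

lemma assoc_iso_core: "g \<in> core \<Longrightarrow> assoc_iso e g \<in> core"
  unfolding core_def by (metis INT_iff UNIV_I level_Suc_iff)

lemma subset_core:
  assumes "\<And>e. K \<subseteq> assoc e" "\<And>e. assoc_iso e ` K \<subseteq> K"
  shows "K \<subseteq> core"
proof -
  have "K \<subseteq> level n" for n
  proof (induction n)
    case 0
    show ?case by (simp add: level_def)
  next
    case (Suc n)
    then show ?case
      using assms by (blast intro: level_Suc_iff[THEN iffD2])
  qed
  then show ?thesis
    by (auto simp: core_def)
qed

lemma phi_image_core: "phi ` core = core"
proof
  show "phi ` core \<subseteq> core"
    using assoc_iso_core[of _ False] by (auto simp: assoc_iso_def)
  show "core \<subseteq> phi ` core"
  proof
    fix g assume g: "g \<in> core"
    have "assoc_iso True g \<in> core" "g = phi (assoc_iso True g)"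
      using assoc_iso_core[OF g] assoc_iso_cancel[of g True] core_subset_assoc[of True] g
      by (auto simp: assoc_iso_def[of False])
    then show "g \<in> phi ` core" by blast
  qed
qed

lemma core_maximal:
  assumes "K \<subseteq> A" "phi ` K = K"
  shows "K \<subseteq> core"
proof (rule subset_core)
  have "K \<subseteq> B"
    using assms phi_bij bij_betw_imp_surj_on by blast
  then show "K \<subseteq> assoc e" for e
    using assms by (simp add: assoc_def)
  have "inv_into A phi k \<in> K" if "k \<in> K" for k
    using that assms phi_bij by (metis bij_betw_imp_inj_on imageE inv_into_f_f subsetD)
  then show "assoc_iso e ` K \<subseteq> K" for e
    using assms by (auto simp: assoc_iso_def)
qed

lemma core_subgroup: "subgroup core G"
proof (rule subgroupI)
  show "core \<subseteq> carrier G"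
    using core_subset_assoc assoc_subset_carrier by blast
  have "{\<one>} \<subseteq> core"
    by (rule subset_core) (simp_all add: assoc_iso_one subgroup.one_closed[OF assoc_subgroup])
  then show "core \<noteq> {}"
    by blast
next
  let ?K = "{g \<otimes> h | g h. g \<in> core \<and> h \<in> core}"
  have "?K \<subseteq> core"
  proof (rule subset_core)
    show "?K \<subseteq> assoc e" for e
      using core_subset_assoc subgroup.m_closed[OF assoc_subgroup] by blast
    have "assoc_iso e (g \<otimes> h) \<in> ?K" if "g \<in> core" "h \<in> core" for e g h
      using that core_subset_assoc[of e] assoc_iso_mult[of g e h] assoc_iso_core by blast
    then show "assoc_iso e ` ?K \<subseteq> ?K" for e
      by blast
  qed
  then show "g \<in> core \<Longrightarrow> h \<in> core \<Longrightarrow> g \<otimes> h \<in> core" for g h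
    by blast
next
  have "m_inv G ` core \<subseteq> core"
  proof (rule subset_core)
    show "m_inv G ` core \<subseteq> assoc e" for e
      using core_subset_assoc subgroup.m_inv_closed[OF assoc_subgroup] by blast
    have "assoc_iso e (inv g) \<in> m_inv G ` core" if "g \<in> core" for e g
      using that core_subset_assoc[of e] assoc_iso_inv[of g e] assoc_iso_core by blast
    then show "assoc_iso e ` m_inv G ` core \<subseteq> m_inv G ` core" for e
      by blast
  qed
  then show "g \<in> core \<Longrightarrow> inv g \<in> core" for g
    by blast
qed

lemma level_0: "level 0 = UNIV"
  by (simp add: level_def)

lemma level_Suc_eq:
  "level (Suc n) = {g \<in> A \<inter> B. phi g \<in> level n \<and> inv_into A phi g \<in> level n}"
  using level_Suc_iff by (auto simp: all_bool_eq assoc_def assoc_iso_def)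

lemma hnn_core_seq_eq_level: "hnn_core_seq A B phi k = level (Suc k)"
proof (induction k)
  case 0
  show ?case
    by (auto simp: level_Suc_eq level_0)
next
  case (Suc k)
  have inv_phi: "inv_into A phi (phi a) = a" if "a \<in> A" for a
    using that phi_bij by (simp add: bij_betw_def)
  have phi_inv: "phi (inv_into A phi b) = b" if "b \<in> B" for b
    using that phi_bij by (simp add: bij_betw_def f_inv_into_f)
  let ?L = "level (Suc k)"
  have L: "?L \<subseteq> A \<inter> B"
    by (auto simp: level_Suc_eq)
  show ?case
  proof (rule Set.set_eqI)
    fix g
    show "g \<in> hnn_core_seq A B phi (Suc k) \<longleftrightarrow> g \<in> level (Suc (Suc k))"
    proof
      assume "g \<in> hnn_core_seq A B phi (Suc k)"
      then obtain h where g: "g \<in> A" "phi g \<in> ?L" "g \<in> ?L" and h: "h \<in> ?L" "g = phi h"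
        by (auto simp: Suc.IH)
      then have "inv_into A phi g \<in> ?L"
        using L inv_phi by auto
      with g L show "g \<in> level (Suc (Suc k))"
        by (auto simp: level_Suc_eq[of "Suc k"])
    next
      assume g: "g \<in> level (Suc (Suc k))"
      then have "g \<in> ?L"
        using level_mono[of "Suc k" "Suc (Suc k)"] by auto
      moreover have "g = phi (inv_into A phi g)" "inv_into A phi g \<in> ?L" "g \<in> A" "phi g \<in> ?L"
        using g phi_inv by (auto simp: level_Suc_eq[of "Suc k"])
      ultimately show "g \<in> hnn_core_seq A B phi (Suc k)"
        by (auto simp: Suc.IH)
    qed
  qed
qed

lemma hnn_core_eq_core: "hnn_core A B phi = core"
proof -
  have "(\<Inter>k. level (Suc k)) = (\<Inter>n. level n)"
  proof
    show "(\<Inter>k. level (Suc k)) \<subseteq> (\<Inter>n. level n)"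
      using level_mono[of n "Suc n" for n] by (auto simp: level_0)
  qed blast
  then show ?thesis
    by (simp add: hnn_core_def core_def hnn_core_seq_eq_level)
qed

lemma core_carrier: "core \<subseteq> carrier G"
  using core_subset_assoc assoc_subset_carrier by blast

lemma phi_defined_iff: "phi_defined A B phi j g \<longleftrightarrow> iter_defined (j < 0) (nat \<bar>j\<bar>) g"
  by (simp add: phi_defined_def iter_defined_True iter_defined_False)

lemma core_eq_phi_defined: "core = {g \<in> carrier G. \<forall>j::int. phi_defined A B phi j g}"
proof -
  have "(\<forall>e n. iter_defined e n g) \<longleftrightarrow> (\<forall>j::int. phi_defined A B phi j g)" for g
  proof
    assume all: "\<forall>j::int. phi_defined A B phi j g"
    show "\<forall>e n. iter_defined e n g"
    proof (intro allI)
      fix e n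
      show "iter_defined e n g"
      proof (cases "e \<and> n > 0")
        case True
        then show ?thesis
          using all[rule_format, of "- int n"] by (simp add: phi_defined_iff)
      next
        case False
        then show ?thesis
          using all[rule_format, of "int n"] by (cases e) (simp_all add: phi_defined_iff)
      qed
    qed
  qed (simp add: phi_defined_iff)
  then show ?thesis
    using core_carrier by (auto simp: core_def level_def)
qed

lemma phi_pos_defined_Suc_card_core:
  assumes "finite A" "phi_pos_defined A phi (Suc (card A)) g"
  shows "g \<in> core"
proof -
  obtain d where d: "0 < d" "d \<le> card A" "(phi ^^ d) g = g"
    using funpow_period_on_finite[OF assms(1) _ assms(2)] phi_bij bij_betw_imp_inj_on by blast
  let ?orbit = "range (\<lambda>m. (phi ^^ m) g)"
  have "(phi ^^ m) g \<in> A" for m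
  proof -
    have "m mod d < Suc (card A)"
      using d mod_less_divisor[of d m] by linarith
    then show ?thesis
      using assms(2) funpow_mod_period[OF d(3), of m] by (simp add: phi_pos_defined_iff)
  qed
  then have "?orbit \<subseteq> A"
    by blast
  moreover have "phi ` ?orbit = ?orbit"
  proof
    show "phi ` ?orbit \<subseteq> ?orbit"
    proof
      fix x assume "x \<in> phi ` ?orbit"
      then obtain m where "x = phi ((phi ^^ m) g)"
        by blast
      then have "x = (phi ^^ Suc m) g"
        by simp
      then show "x \<in> ?orbit"
        by blast
    qed
    have "(phi ^^ m) g = phi ((phi ^^ (m + d - 1)) g)" for m
      using funpow_mod_period[OF d(3), of m] funpow_mod_period[OF d(3), of "m + d"] d(1)
      by (metis Suc_pred' add_gr_0 funpow.simps(2) comp_apply mod_add_self2)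
    then show "?orbit \<subseteq> phi ` ?orbit"
      by blast
  qed
  ultimately have "?orbit \<subseteq> core"
    by (rule core_maximal)
  then show ?thesis
    by (metis funpow_0 range_eqI subsetD)
qed

lemma core_eq_phi_defined_finite:
  assumes "finite A" "card A < s"
  shows "core = {g \<in> carrier G. \<forall>j::nat. j \<le> s \<longrightarrow> phi_defined A B phi (int j) g}"
proof -
  have "(\<forall>j \<le> s. phi_defined A B phi (int j) g) \<longleftrightarrow> phi_pos_defined A phi s g" for g
    by (auto simp: phi_defined_def phi_pos_defined_iff)
  moreover have "phi_pos_defined A phi s g \<Longrightarrow> g \<in> core" for g
    using phi_pos_defined_Suc_card_core[OF assms(1)] phi_pos_defined_mono[of A phi s g "Suc (card A)"] assms(2)
    by simp
  moreover have "g \<in> core \<Longrightarrow> phi_pos_defined A phi s g" for g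
    by (simp add: core_def level_def flip: iter_defined_False)
  ultimately show ?thesis
    using core_carrier by blast
qed

lemma hnn_eq_words: "hnn_eq G A phi u v \<Longrightarrow> u \<in> hnn_words G \<and> v \<in> hnn_words G"
proof (induction rule: hnn_eq.induct)
  case (hnn_rel a)
  then have "a \<in> carrier G" "phi a \<in> carrier G"
    using subgroup.subset[OF subgroup_A] subgroup.subset[OF subgroup_B] phi_bij bij_betwE by blast+
  then show ?case
    by (simp add: hnn_words_def)
qed (auto simp: hnn_words_def)

lemma hnn_class_eq:
  assumes "hnn_eq G A phi u v"
  shows "hnn_class G A phi u = hnn_class G A phi v"
proof -
  have "hnn_eq G A phi u w \<longleftrightarrow> hnn_eq G A phi v w" for w
    using hnn_trans[OF hnn_sym[OF assms], of w] hnn_trans[OF assms, of w] by blast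
  then show ?thesis
    by (simp add: hnn_class_def)
qed

lemma hnn_class_eq_iff:
  assumes "v \<in> hnn_words G"
  shows "hnn_class G A phi u = hnn_class G A phi v \<longleftrightarrow> hnn_eq G A phi u v"
proof
  assume "hnn_class G A phi u = hnn_class G A phi v"
  moreover have "v \<in> hnn_class G A phi v"
    using hnn_refl[OF assms] by (simp add: hnn_class_def)
  ultimately show "hnn_eq G A phi u v"
    by (metis hnn_class_def mem_Collect_eq)
qed (rule hnn_class_eq)

lemma hnn_class_mult:
  assumes u: "u \<in> hnn_words G" and v: "v \<in> hnn_words G"
  shows "hnn_class G A phi u \<otimes>\<^bsub>HNN G A phi\<^esub> hnn_class G A phi v = hnn_class G A phi (u @ v)"
proof -
  define u' where "u' = (SOME u'. u' \<in> hnn_class G A phi u)"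
  define v' where "v' = (SOME v'. v' \<in> hnn_class G A phi v)"
  have eu: "hnn_eq G A phi u u'"
    unfolding u'_def hnn_class_def mem_Collect_eq by (rule someI[of _ u]) (rule hnn_refl[OF u])
  have ev: "hnn_eq G A phi v v'"
    unfolding v'_def hnn_class_def mem_Collect_eq by (rule someI[of _ v]) (rule hnn_refl[OF v])
  have "hnn_eq G A phi (u @ v) (u' @ v)"
    using hnn_ctxt[OF eu _ v, of "[]"] by (simp add: hnn_words_def)
  moreover have "hnn_eq G A phi (u' @ v) (u' @ v')"
    using hnn_ctxt[OF ev _ _, of u' "[]"] hnn_eq_words[OF eu] by (simp add: hnn_words_def)
  ultimately have "hnn_eq G A phi (u @ v) (u' @ v')"
    by (rule hnn_trans)
  then show ?thesis
    by (simp add: HNN_def hnn_mult_def u'_def v'_def hnn_class_eq)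
qed

fun inv_letter :: "'g hnn_letter \<Rightarrow> 'g hnn_letter" where
  "inv_letter (Gen g) = Gen (inv g)"
| "inv_letter T = Tinv"
| "inv_letter Tinv = T"

definition inv_word :: "'g hnn_letter list \<Rightarrow> 'g hnn_letter list" where
  "inv_word w = rev (map inv_letter w)"

lemma inv_word_words:
  assumes "w \<in> hnn_words G"
  shows "inv_word w \<in> hnn_words G"
proof -
  have "\<forall>g. inv_letter l = Gen g \<longrightarrow> g \<in> carrier G" if "\<forall>g. l = Gen g \<longrightarrow> g \<in> carrier G" for l
    using that by (cases l) auto
  then show ?thesis
    using assms by (auto simp: hnn_words_def inv_word_def)
qed

lemma inv_word_cancel: "w \<in> hnn_words G \<Longrightarrow> hnn_eq G A phi (inv_word w @ w) []"
proof (induction w)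
  case Nil
  then show ?case
    by (simp add: inv_word_def hnn_refl)
next
  case (Cons l w)
  then have l: "\<forall>g. l = Gen g \<longrightarrow> g \<in> carrier G" and w: "w \<in> hnn_words G"
    by (auto simp: hnn_words_def)
  have "hnn_eq G A phi [inv_letter l, l] []"
  proof (cases l)
    case (Gen g)
    then have "hnn_eq G A phi [Gen (inv g), Gen g] [Gen \<one>]"
      using l hnn_mult[of "inv g" G g A phi] by simp
    then have "hnn_eq G A phi [Gen (inv g), Gen g] []"
      using hnn_one by (rule hnn_trans)
    with Gen show ?thesis
      by simp
  qed (simp_all add: hnn_t_tinv hnn_tinv_t)
  then have "hnn_eq G A phi (inv_word w @ [inv_letter l, l] @ w) (inv_word w @ [] @ w)"
    by (rule hnn_ctxt[OF _ inv_word_words[OF w] w])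
  then have "hnn_eq G A phi (inv_word w @ [inv_letter l, l] @ w) (inv_word w @ w)"
    by simp
  then have "hnn_eq G A phi (inv_word w @ [inv_letter l, l] @ w) []"
    using Cons.IH[OF w] by (rule hnn_trans)
  then show ?case
    by (simp add: inv_word_def)
qed

lemma HNN_group: "group (HNN G A phi)"
proof (rule groupI)
  have carrier: "carrier (HNN G A phi) = hnn_class G A phi ` hnn_words G"
    by (simp add: HNN_def)
  have one: "\<one>\<^bsub>HNN G A phi\<^esub> = hnn_class G A phi []"
    by (simp add: HNN_def)
  have Nil: "[] \<in> hnn_words G" and append: "u @ v \<in> hnn_words G \<longleftrightarrow> u \<in> hnn_words G \<and> v \<in> hnn_words G" for u v
    by (auto simp: hnn_words_def)
  show "x \<otimes>\<^bsub>HNN G A phi\<^esub> y \<in> carrier (HNN G A phi)"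
    if "x \<in> carrier (HNN G A phi)" "y \<in> carrier (HNN G A phi)" for x y
    using that by (auto simp: carrier hnn_class_mult append)
  show "\<one>\<^bsub>HNN G A phi\<^esub> \<in> carrier (HNN G A phi)"
    by (simp add: carrier one Nil)
  show "x \<otimes>\<^bsub>HNN G A phi\<^esub> y \<otimes>\<^bsub>HNN G A phi\<^esub> z = x \<otimes>\<^bsub>HNN G A phi\<^esub> (y \<otimes>\<^bsub>HNN G A phi\<^esub> z)"
    if "x \<in> carrier (HNN G A phi)" "y \<in> carrier (HNN G A phi)" "z \<in> carrier (HNN G A phi)" for x y z
    using that by (auto simp: carrier hnn_class_mult append)
  show "\<one>\<^bsub>HNN G A phi\<^esub> \<otimes>\<^bsub>HNN G A phi\<^esub> x = x" if "x \<in> carrier (HNN G A phi)" for x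
    using that by (auto simp: carrier one hnn_class_mult Nil)
  show "\<exists>y\<in>carrier (HNN G A phi). y \<otimes>\<^bsub>HNN G A phi\<^esub> x = \<one>\<^bsub>HNN G A phi\<^esub>"
    if x: "x \<in> carrier (HNN G A phi)" for x
  proof -
    obtain w where w: "w \<in> hnn_words G" "x = hnn_class G A phi w"
      using x unfolding carrier by blast
    then have "hnn_class G A phi (inv_word w) \<otimes>\<^bsub>HNN G A phi\<^esub> x = \<one>\<^bsub>HNN G A phi\<^esub>"
      using hnn_class_mult[OF inv_word_words[OF w(1)] w(1)] hnn_class_eq[OF inv_word_cancel[OF w(1)]]
      by (simp add: one)
    then show ?thesis
      using inv_word_words[OF w(1)] carrier by blast
  qed
qed

text \<open>A state \<open>(g, [(e1, r1), \<dots>, (en, rn)])\<close> stands for the Britton normal form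
  \<open>g t_e1 r1 \<cdots> t_en rn\<close>, where \<open>t_True = t\<close>, \<open>t_False = t\<inverse>\<close>, each \<open>ri\<close> is the chosen
  representative of its coset of \<open>assoc ei\<close>, and \<open>reduced\<close> excludes a segment \<open>t_e \<one> t_(\<not>e)\<close>.
  Letting \<open>G*\<close> act on these states shows that words equal in \<open>G*\<close> have equal normal forms.\<close>

fun reduced :: "(bool \<times> 'g) list \<Rightarrow> bool" where
  "reduced ((e, r) # (e', r') # xs) = ((r = \<one> \<longrightarrow> e' = e) \<and> reduced ((e', r') # xs))"
| "reduced _ = True"

definition normal_state :: "'g \<times> (bool \<times> 'g) list \<Rightarrow> bool" where
  "normal_state x \<longleftrightarrow> fst x \<in> carrier G
     \<and> (\<forall>(e, r) \<in> set (snd x). r \<in> carrier G \<and> coset_rep (assoc e) r = r) \<and> reduced (snd x)"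

definition act_gen :: "'g \<Rightarrow> 'g \<times> (bool \<times> 'g) list \<Rightarrow> 'g \<times> (bool \<times> 'g) list" where
  "act_gen g x = (g \<otimes> fst x, snd x)"

definition act_stable :: "bool \<Rightarrow> 'g \<times> (bool \<times> 'g) list \<Rightarrow> 'g \<times> (bool \<times> 'g) list" where
  "act_stable e x = (let r = coset_rep (assoc e) (fst x); h = fst x \<otimes> inv r in
     if r = \<one> \<and> snd x \<noteq> [] \<and> fst (hd (snd x)) = (\<not> e)
     then (assoc_iso e h \<otimes> snd (hd (snd x)), tl (snd x))
     else (assoc_iso e h, (e, r) # snd x))"

lemma act_stable_Pair:
  assumes "r = coset_rep (assoc e) g" "h = g \<otimes> inv r"
  shows "act_stable e (g, xs) = (if r = \<one> \<and> xs \<noteq> [] \<and> fst (hd xs) = (\<not> e)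
     then (assoc_iso e h \<otimes> snd (hd xs), tl xs) else (assoc_iso e h, (e, r) # xs))"
  using assms by (simp add: act_stable_def Let_def)

lemma reduced_tl: "reduced (y # xs) \<Longrightarrow> reduced xs"
  by (cases xs) (auto, metis reduced.simps(1) surj_pair)

lemma normal_state_act_gen: "g \<in> carrier G \<Longrightarrow> normal_state x \<Longrightarrow> normal_state (act_gen g x)"
  by (simp add: normal_state_def act_gen_def)

lemma normal_state_act_stable:
  assumes "normal_state x"
  shows "normal_state (act_stable e x)"
proof -
  obtain g xs where x: "x = (g, xs)"
    by (cases x)
  define r where "r = coset_rep (assoc e) g"
  define h where "h = g \<otimes> inv r"
  have g: "g \<in> carrier G" and xs: "\<forall>(e, s)\<in>set xs. s \<in> carrier G \<and> coset_rep (assoc e) s = s"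
    and red: "reduced xs"
    using assms by (simp_all add: normal_state_def x)
  have fh: "assoc_iso e h \<in> carrier G"
    using assoc_subset_carrier[OF assoc_iso_in[OF coset_rep_factor[OF assoc_subgroup g]]]
    by (simp add: h_def r_def)
  show ?thesis
  proof (cases "r = \<one> \<and> xs \<noteq> [] \<and> fst (hd xs) = (\<not> e)")
    case True
    then obtain s xs' where "xs = (\<not> e, s) # xs'"
      by (cases xs) auto
    then show ?thesis
      using True xs red fh reduced_tl act_stable_Pair[OF r_def h_def]
      by (auto simp: normal_state_def x)
  next
    case False
    have "reduced ((e, r) # xs)"
      using False red by (cases xs) auto
    moreover have "r \<in> carrier G" "coset_rep (assoc e) r = r"
      using coset_rep_carrier coset_rep_idem assoc_subgroup g by (simp_all add: r_def)
    moreover have "act_stable e x = (assoc_iso e h, (e, r) # xs)"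
      unfolding x act_stable_Pair[OF r_def h_def] if_not_P[OF False] ..
    ultimately show ?thesis
      using xs fh by (simp add: normal_state_def)
  qed
qed

lemma act_stable_inverse:
  assumes "normal_state x"
  shows "act_stable (\<not> e) (act_stable e x) = x"
proof -
  obtain g xs where x: "x = (g, xs)"
    by (cases x)
  have g: "g \<in> carrier G" and xs: "\<forall>(e, s)\<in>set xs. s \<in> carrier G \<and> coset_rep (assoc e) s = s"
    and red: "reduced xs"
    using assms by (simp_all add: normal_state_def x)
  define r where "r = coset_rep (assoc e) g"
  define h where "h = g \<otimes> inv r"
  have r: "r \<in> carrier G"
    using coset_rep_carrier[OF assoc_subgroup g] by (simp add: r_def)
  have h: "h \<in> assoc e"
    using coset_rep_factor[OF assoc_subgroup g] by (simp add: h_def r_def)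
  have fh: "assoc_iso e h \<in> assoc (\<not> e)" "assoc_iso e h \<in> carrier G"
    using assoc_iso_in[OF h] assoc_subset_carrier by auto
  show ?thesis
  proof (cases "r = \<one> \<and> xs \<noteq> [] \<and> fst (hd xs) = (\<not> e)")
    case True
    then obtain s xs' where xs': "xs = (\<not> e, s) # xs'"
      by (cases xs) auto
    have s: "s \<in> carrier G" "coset_rep (assoc (\<not> e)) s = s"
      using xs xs' by auto
    have "act_stable e x = (assoc_iso e h \<otimes> s, xs')"
      using True xs' act_stable_Pair[OF r_def h_def] x by simp
    moreover have "s = coset_rep (assoc (\<not> e)) (assoc_iso e h \<otimes> s)"
      using coset_rep_mult_left[OF assoc_subgroup fh(1) s(1)] s(2) by simp
    moreover have "assoc_iso e h = assoc_iso e h \<otimes> s \<otimes> inv s"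
      using fh(2) s(1) by (simp add: m_assoc)
    ultimately have "act_stable (\<not> e) (act_stable e x) = (assoc_iso (\<not> e) (assoc_iso e h), (\<not> e, s) # xs')"
      using act_stable_Pair red xs' by (cases xs') auto
    moreover have "h = g"
      using True r g by (simp add: h_def)
    ultimately show ?thesis
      using x xs' assoc_iso_cancel[OF h] by simp
  next
    case False
    have "act_stable e x = (assoc_iso e h, (e, r) # xs)"
      unfolding x act_stable_Pair[OF r_def h_def] if_not_P[OF False] ..
    moreover have "\<one> = coset_rep (assoc (\<not> e)) (assoc_iso e h)"
      using coset_rep_eq_one_iff[OF assoc_subgroup fh(2), of "\<not> e"] fh(1) by simp
    moreover have "assoc_iso e h = assoc_iso e h \<otimes> inv \<one>"
      using fh(2) by simp
    ultimately have "act_stable (\<not> e) (act_stable e x) = (assoc_iso (\<not> e) (assoc_iso e h) \<otimes> r, xs)"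
      using act_stable_Pair by simp
    moreover have "h \<otimes> r = g"
      using r g by (simp add: h_def m_assoc)
    ultimately show ?thesis
      using x assoc_iso_cancel[OF h] by simp
  qed
qed

lemma act_stable_act_gen:
  assumes "normal_state x" "c \<in> assoc e"
  shows "act_stable e (act_gen c x) = act_gen (assoc_iso e c) (act_stable e x)"
proof -
  obtain g xs where x: "x = (g, xs)"
    by (cases x)
  have g: "g \<in> carrier G"
    using assms(1) by (simp add: normal_state_def x)
  have c: "c \<in> carrier G"
    using assms(2) assoc_subset_carrier by blast
  define r where "r = coset_rep (assoc e) g"
  define h where "h = g \<otimes> inv r"
  have r: "r \<in> carrier G"
    using coset_rep_carrier[OF assoc_subgroup g] by (simp add: r_def)
  have h: "h \<in> assoc e"
    using coset_rep_factor[OF assoc_subgroup g] by (simp add: h_def r_def)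
  have "r = coset_rep (assoc e) (c \<otimes> g)"
    using coset_rep_mult_left[OF assoc_subgroup assms(2) g] by (simp add: r_def)
  moreover have "c \<otimes> h = c \<otimes> g \<otimes> inv r"
    using c g r by (simp add: h_def m_assoc)
  ultimately have "act_stable e (c \<otimes> g, xs) = (if r = \<one> \<and> xs \<noteq> [] \<and> fst (hd xs) = (\<not> e)
     then (assoc_iso e (c \<otimes> h) \<otimes> snd (hd xs), tl xs) else (assoc_iso e (c \<otimes> h), (e, r) # xs))"
    by (rule act_stable_Pair)
  moreover have "assoc_iso e (c \<otimes> h) = assoc_iso e c \<otimes> assoc_iso e h"
    by (rule assoc_iso_mult[OF assms(2) h])
  moreover have "assoc_iso e c \<in> carrier G" "assoc_iso e h \<in> carrier G"
    using assoc_iso_in assms(2) h assoc_subset_carrier by blast+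
  moreover have "snd (hd xs) \<in> carrier G" if "xs \<noteq> []"
    using assms(1) that by (cases xs) (auto simp: normal_state_def x)
  ultimately show ?thesis
    using act_stable_Pair[OF r_def h_def] by (simp add: x act_gen_def m_assoc)
qed

fun act_letter :: "'g hnn_letter \<Rightarrow> 'g \<times> (bool \<times> 'g) list \<Rightarrow> 'g \<times> (bool \<times> 'g) list" where
  "act_letter (Gen g) = act_gen g"
| "act_letter T = act_stable True"
| "act_letter Tinv = act_stable False"

definition act_word :: "'g hnn_letter list \<Rightarrow> 'g \<times> (bool \<times> 'g) list \<Rightarrow> 'g \<times> (bool \<times> 'g) list" where
  "act_word = foldr act_letter"

lemma act_word_simps [simp]:
  "act_word [] x = x" "act_word (l # w) x = act_letter l (act_word w x)"
  by (simp_all add: act_word_def)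

lemma act_word_append: "act_word (u @ v) x = act_word u (act_word v x)"
  by (induction u) auto

lemma normal_state_act_word:
  "w \<in> hnn_words G \<Longrightarrow> normal_state x \<Longrightarrow> normal_state (act_word w x)"
proof (induction w)
  case (Cons l w)
  then have "normal_state (act_word w x)" "\<forall>g. l = Gen g \<longrightarrow> g \<in> carrier G"
    by (auto simp: hnn_words_def)
  then show ?case
    by (cases l) (auto intro: normal_state_act_gen normal_state_act_stable)
qed simp

lemma act_word_hnn_eq:
  "hnn_eq G A phi u v \<Longrightarrow> normal_state x \<Longrightarrow> act_word u x = act_word v x"
proof (induction arbitrary: x rule: hnn_eq.induct)
  case (hnn_ctxt u v p q)
  then show ?case
    using normal_state_act_word[OF hnn_ctxt.hyps(3) hnn_ctxt.prems] by (simp add: act_word_append)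
next
  case hnn_t_tinv
  then show ?case
    using act_stable_inverse[of x False] by simp
next
  case hnn_tinv_t
  then show ?case
    using act_stable_inverse[of x True] by simp
next
  case (hnn_rel a)
  then have "phi a \<in> assoc True" "assoc_iso True (phi a) = a"
    using assoc_iso_in[of a False] assoc_iso_cancel[of a False] by (simp_all add: assoc_def assoc_iso_def)
  then have "act_stable True (act_gen (phi a) x) = act_gen a (act_stable True x)"
    using act_stable_act_gen[OF hnn_rel.prems] by metis
  then show ?case
    using act_stable_inverse[of "act_gen (phi a) x" True] hnn_rel.prems hnn_rel.hyps
      normal_state_act_gen[of "phi a" x] assoc_subset_carrier \<open>phi a \<in> assoc True\<close>
    by simp
qed (auto simp: act_gen_def m_assoc normal_state_def)

definition stable_letter :: "bool \<Rightarrow> 'g hnn_letter" where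
  "stable_letter e = (if e then T else Tinv)"

lemma act_letter_stable [simp]: "act_letter (stable_letter e) = act_stable e"
  by (simp add: stable_letter_def)

lemma hnn_eq_conj_stable:
  assumes x: "x \<in> carrier G" and z: "z \<in> carrier G"
    and eq: "hnn_eq G A phi [stable_letter e, Gen x, stable_letter (\<not> e)] [Gen z]"
  shows "x \<in> assoc e \<and> z = assoc_iso e x"
proof -
  define r where "r = coset_rep (assoc e) x"
  define h where "h = x \<otimes> inv r"
  have "normal_state (\<one>, [])"
    by (simp add: normal_state_def)
  then have "act_word [stable_letter e, Gen x, stable_letter (\<not> e)] (\<one>, []) = (z, [])"
    using act_word_hnn_eq[OF eq] z by (simp add: act_gen_def)
  moreover have "act_stable (\<not> e) (\<one>, []) = (\<one>, [(\<not> e, \<one>)])"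
    using coset_rep_eq_one_iff[OF assoc_subgroup one_closed] subgroup.one_closed[OF assoc_subgroup]
    by (simp add: act_stable_def Let_def assoc_iso_one)
  moreover have "act_stable e (x, [(\<not> e, \<one>)]) = (if r = \<one> then (assoc_iso e h \<otimes> \<one>, [])
      else (assoc_iso e h, [(e, r), (\<not> e, \<one>)]))"
    by (simp add: act_stable_Pair[OF r_def h_def])
  ultimately have r: "r = \<one>" and "z = assoc_iso e h \<otimes> \<one>"
    using x by (auto simp: act_gen_def split: if_splits)
  moreover have "h = x"
    using r x by (simp add: h_def)
  moreover have "x \<in> assoc e"
    using r coset_rep_eq_one_iff[OF assoc_subgroup x] by (simp add: r_def)
  ultimately show ?thesis
    using assoc_subset_carrier[OF assoc_iso_in] by simp
qed

end

sublocale hnn_setting \<subseteq> star: group "HNN G A phi"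
  by (rule HNN_group)

context hnn_setting
begin

abbreviation Gstar :: "'g hnn_letter list set monoid" where
  "Gstar \<equiv> HNN G A phi"

abbreviation stable_elt :: "bool \<Rightarrow> 'g hnn_letter list set" where
  "stable_elt e \<equiv> hnn_class G A phi [stable_letter e]"

lemma stable_words: "[stable_letter e] \<in> hnn_words G"
  by (simp add: hnn_words_def stable_letter_def)

lemma gen_words: "g \<in> carrier G \<Longrightarrow> [Gen g] \<in> hnn_words G"
  by (simp add: hnn_words_def)

lemma stable_elt_carrier: "stable_elt e \<in> carrier Gstar"
  using stable_words by (simp add: HNN_def)

lemma hnn_emb_carrier: "g \<in> carrier G \<Longrightarrow> hnn_emb G A phi g \<in> carrier Gstar"
  using gen_words by (simp add: HNN_def hnn_emb_def)

lemma stable_elt_cancel: "stable_elt e \<otimes>\<^bsub>Gstar\<^esub> stable_elt (\<not> e) = \<one>\<^bsub>Gstar\<^esub>"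
proof -
  have "hnn_eq G A phi [stable_letter e, stable_letter (\<not> e)] []"
    by (cases e) (simp_all add: stable_letter_def hnn_t_tinv hnn_tinv_t)
  then show ?thesis
    using hnn_class_mult[OF stable_words stable_words] hnn_class_eq by (simp add: HNN_def)
qed

lemma stable_elt_True: "stable_elt True = hnn_t G A phi"
  by (simp add: stable_letter_def hnn_t_def)

lemma stable_elt_False: "stable_elt False = inv\<^bsub>Gstar\<^esub> hnn_t G A phi"
proof -
  have "stable_elt False \<otimes>\<^bsub>Gstar\<^esub> stable_elt True = \<one>\<^bsub>Gstar\<^esub>"
    using stable_elt_cancel[of False] by simp
  then show ?thesis
    using star.inv_equality stable_elt_carrier stable_elt_True by metis
qed

lemma conj_stable_elt:
  "x \<in> carrier G \<Longrightarrow>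
    stable_elt e \<otimes>\<^bsub>Gstar\<^esub> hnn_emb G A phi x \<otimes>\<^bsub>Gstar\<^esub> stable_elt (\<not> e) = hnn_class G A phi [stable_letter e, Gen x, stable_letter (\<not> e)]"
  using stable_words gen_words by (simp add: hnn_emb_def hnn_class_mult hnn_words_def)

lemma conj_stable_elt_assoc:
  assumes "a \<in> assoc e"
  shows "stable_elt e \<otimes>\<^bsub>Gstar\<^esub> hnn_emb G A phi a \<otimes>\<^bsub>Gstar\<^esub> stable_elt (\<not> e) = hnn_emb G A phi (assoc_iso e a)"
proof -
  have rel: "stable_elt False \<otimes>\<^bsub>Gstar\<^esub> hnn_emb G A phi a \<otimes>\<^bsub>Gstar\<^esub> stable_elt True = hnn_emb G A phi (phi a)"
    if "a \<in> A" for a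
    using that hnn_class_eq[OF hnn_rel] conj_stable_elt[of a False] subgroup.mem_carrier[OF subgroup_A]
    by (simp add: stable_letter_def hnn_emb_def)
  show ?thesis
  proof (cases e)
    case True
    define a' where "a' = assoc_iso True a"
    have a': "a' \<in> A" "phi a' = a"
      using assoc_iso_in[of a True] assoc_iso_cancel[of a True] assms True
      by (simp_all add: a'_def assoc_def assoc_iso_def)
    have a'_carrier: "hnn_emb G A phi a' \<in> carrier Gstar"
      using hnn_emb_carrier subgroup.mem_carrier[OF subgroup_A a'(1)] by blast
    have "stable_elt True \<otimes>\<^bsub>Gstar\<^esub> hnn_emb G A phi a \<otimes>\<^bsub>Gstar\<^esub> stable_elt False
        = stable_elt True \<otimes>\<^bsub>Gstar\<^esub> (stable_elt False \<otimes>\<^bsub>Gstar\<^esub> hnn_emb G A phi a' \<otimes>\<^bsub>Gstar\<^esub> stable_elt True)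
          \<otimes>\<^bsub>Gstar\<^esub> stable_elt False"
      using rel[OF a'(1)] a'(2) by simp
    also have "\<dots> = (stable_elt True \<otimes>\<^bsub>Gstar\<^esub> stable_elt False) \<otimes>\<^bsub>Gstar\<^esub> hnn_emb G A phi a'
          \<otimes>\<^bsub>Gstar\<^esub> (stable_elt True \<otimes>\<^bsub>Gstar\<^esub> stable_elt False)"
      using a'_carrier stable_elt_carrier by (simp add: star.m_assoc)
    also have "\<dots> = hnn_emb G A phi a'"
      using stable_elt_cancel[of True] a'_carrier by simp
    finally show ?thesis
      using True by (simp add: a'_def)
  next
    case False
    then show ?thesis
      using rel assms by (simp add: assoc_def assoc_iso_def)
  qed
qed

lemma conj_stable_elt_in_G:
  assumes "x \<in> carrier G" "z \<in> carrier G"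
    and "stable_elt e \<otimes>\<^bsub>Gstar\<^esub> hnn_emb G A phi x \<otimes>\<^bsub>Gstar\<^esub> stable_elt (\<not> e) = hnn_emb G A phi z"
  shows "x \<in> assoc e \<and> z = assoc_iso e x"
  using assms conj_stable_elt hnn_class_eq_iff[OF gen_words] hnn_eq_conj_stable
  by (simp add: hnn_emb_def)

definition conj_t :: "int \<Rightarrow> 'g hnn_letter list set \<Rightarrow> 'g hnn_letter list set" where
  "conj_t i y = hnn_t G A phi [^]\<^bsub>Gstar\<^esub> i \<otimes>\<^bsub>Gstar\<^esub> y \<otimes>\<^bsub>Gstar\<^esub> hnn_t G A phi [^]\<^bsub>Gstar\<^esub> (- i)"

definition signed :: "bool \<Rightarrow> nat \<Rightarrow> int" where
  "signed e n = (if e then int n else - int n)"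

lemma hnn_t_carrier: "hnn_t G A phi \<in> carrier Gstar"
  using stable_elt_carrier[of True] by (simp add: stable_elt_True)

lemma conj_t_signed_Suc:
  assumes "y \<in> carrier Gstar"
  shows "conj_t (signed e (Suc n)) y
    = stable_elt e \<otimes>\<^bsub>Gstar\<^esub> conj_t (signed e n) y \<otimes>\<^bsub>Gstar\<^esub> stable_elt (\<not> e)"
proof (cases e)
  case True
  then have "signed e (Suc n) = signed e n + 1"
    by (simp add: signed_def)
  then show ?thesis
    using True star.conj_int_pow_Suc[OF hnn_t_carrier assms, of "signed e n"]
    by (simp add: conj_t_def stable_elt_True stable_elt_False)
next
  case False
  then have "signed e (Suc n) = signed e n - 1"
    by (simp add: signed_def)
  then show ?thesis
    using False star.conj_int_pow_pred[OF hnn_t_carrier assms, of "signed e n"]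
    by (simp add: conj_t_def stable_elt_True stable_elt_False)
qed

lemma funpow_assoc_iso_carrier:
  assumes "iter_defined e n g" "g \<in> carrier G"
  shows "(assoc_iso e ^^ n) g \<in> carrier G"
proof (cases n)
  case (Suc m)
  then have "(assoc_iso e ^^ m) g \<in> assoc e"
    using assms(1) by (simp add: phi_pos_defined_iff)
  then show ?thesis
    using Suc assoc_subset_carrier[OF assoc_iso_in] by simp
qed (simp add: assms(2))

lemma conj_t_iter:
  assumes "g \<in> carrier G" "iter_defined e n g"
  shows "conj_t (signed e n) (hnn_emb G A phi g) = hnn_emb G A phi ((assoc_iso e ^^ n) g)"
  using assms(2)
proof (induction n)
  case 0
  then show ?case
    using hnn_emb_carrier[OF assms(1)] hnn_t_carrier by (simp add: conj_t_def signed_def)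
next
  case (Suc n)
  then have "iter_defined e n g" "(assoc_iso e ^^ n) g \<in> assoc e"
    by (simp_all add: phi_pos_defined_iff)
  then show ?case
    using Suc.IH conj_t_signed_Suc[OF hnn_emb_carrier[OF assms(1)]] conj_stable_elt_assoc by simp
qed

lemma iter_defined_of_conj_t:
  assumes "g \<in> carrier G"
    and "\<forall>k \<le> n. conj_t (signed e k) (hnn_emb G A phi g) \<in> hnn_emb G A phi ` carrier G"
  shows "iter_defined e n g"
  using assms(2)
proof (induction n)
  case (Suc n)
  let ?h = "(assoc_iso e ^^ n) g"
  have defined: "iter_defined e n g"
    using Suc by simp
  obtain z where z: "z \<in> carrier G" "conj_t (signed e (Suc n)) (hnn_emb G A phi g) = hnn_emb G A phi z"
    using Suc.prems by blast
  then have "stable_elt e \<otimes>\<^bsub>Gstar\<^esub> hnn_emb G A phi ?h \<otimes>\<^bsub>Gstar\<^esub> stable_elt (\<not> e) = hnn_emb G A phi z"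
    using conj_t_signed_Suc[OF hnn_emb_carrier[OF assms(1)]] conj_t_iter[OF assms(1) defined] by simp
  then have "?h \<in> assoc e"
    using conj_stable_elt_in_G[OF funpow_assoc_iso_carrier[OF defined assms(1)] z(1)] by blast
  with defined show ?case
    by (auto simp: phi_pos_defined_iff less_Suc_eq)
qed simp

lemma hnn_emb_core:
  "hnn_emb G A phi ` core = (\<Inter>i::int. {hnn_t G A phi [^]\<^bsub>Gstar\<^esub> (- i) \<otimes>\<^bsub>Gstar\<^esub> x
      \<otimes>\<^bsub>Gstar\<^esub> hnn_t G A phi [^]\<^bsub>Gstar\<^esub> i | x. x \<in> hnn_emb G A phi ` carrier G})"
    (is "_ = (\<Inter>i. ?conj i)")
proof -
  have mem: "y \<in> ?conj i \<longleftrightarrow> conj_t i y \<in> hnn_emb G A phi ` carrier G"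
    if "y \<in> carrier Gstar" for y i
    using star.mem_conj_int_pow_iff[OF hnn_t_carrier that, of "hnn_emb G A phi ` carrier G" i]
      hnn_emb_carrier by (auto simp: conj_t_def)
  show ?thesis
  proof (intro equalityI subsetI)
    fix y assume "y \<in> hnn_emb G A phi ` core"
    then obtain g where g: "g \<in> core" "y = hnn_emb G A phi g"
      by blast
    have gc: "g \<in> carrier G"
      using g(1) core_carrier by blast
    show "y \<in> (\<Inter>i. ?conj i)"
    proof
      fix i :: int
      define e n where "e = (0 \<le> i)" and "n = nat \<bar>i\<bar>"
      have "signed e n = i"
        by (simp add: signed_def e_def n_def)
      moreover have "iter_defined e n g"
        using g(1) by (simp add: core_def level_def)
      ultimately have "conj_t i y = hnn_emb G A phi ((assoc_iso e ^^ n) g)"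
          "(assoc_iso e ^^ n) g \<in> carrier G"
        using conj_t_iter[OF gc] funpow_assoc_iso_carrier[OF _ gc] g(2) by auto
      then show "y \<in> ?conj i"
        unfolding mem[OF hnn_emb_carrier[OF gc, folded g(2)]] by blast
    qed
  next
    fix y assume y: "y \<in> (\<Inter>i. ?conj i)"
    then have "y \<in> ?conj 0"
      by blast
    then obtain g where g: "g \<in> carrier G" "y = hnn_emb G A phi g"
      using hnn_emb_carrier by auto
    have all: "conj_t i y \<in> hnn_emb G A phi ` carrier G" for i
      using y mem[OF hnn_emb_carrier[OF g(1), folded g(2)], of i] by blast
    have "iter_defined e n g" for e n
      by (rule iter_defined_of_conj_t[OF g(1)]) (use all g(2) in blast)
    then show "y \<in> hnn_emb G A phi ` core"
      using g by (simp add: core_def level_def)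
  qed
qed

end

theorem lemma2p1:
  fixes G :: "'g monoid" and A B :: "'g set" and phi :: "'g \<Rightarrow> 'g"
  assumes "group G" and "subgroup A G" and "subgroup B G"
    and "phi \<in> hom (G\<lparr>carrier := A\<rparr>) (G\<lparr>carrier := B\<rparr>)"
    and "bij_betw phi A B"
  shows "(subgroup (hnn_core A B phi) G \<and> hnn_core A B phi \<subseteq> A
          \<and> phi ` hnn_core A B phi = hnn_core A B phi
          \<and> (\<forall>K. subgroup K G \<and> K \<subseteq> A \<and> phi ` K = K \<longrightarrow> K \<subseteq> hnn_core A B phi))
     \<and> hnn_emb G A phi ` hnn_core A B phi =
         (\<Inter>i::int. {hnn_t G A phi [^]\<^bsub>HNN G A phi\<^esub> (- i) \<otimes>\<^bsub>HNN G A phi\<^esub> x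
                        \<otimes>\<^bsub>HNN G A phi\<^esub> hnn_t G A phi [^]\<^bsub>HNN G A phi\<^esub> i
                     | x. x \<in> hnn_emb G A phi ` carrier G})
     \<and> hnn_core A B phi = {g \<in> carrier G. \<forall>j::int. phi_defined A B phi j g}
     \<and> (finite A \<longrightarrow> (\<exists>r::nat. \<forall>s\<ge>r.
          hnn_core A B phi = {g \<in> carrier G. \<forall>j::nat. j \<le> s \<longrightarrow> phi_defined A B phi (int j) g}))"
proof -
  interpret hnn_setting G A B phi
    using assms by (simp add: hnn_setting_def hnn_setting_axioms_def)
  have "core \<subseteq> A"
    using core_subset_assoc[of False] by (simp add: assoc_def)
  moreover have "\<exists>r. \<forall>s \<ge> r. core = {g \<in> carrier G. \<forall>j::nat. j \<le> s \<longrightarrow> phi_defined A B phi (int j) g}"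
    if "finite A"
    using core_eq_phi_defined_finite[OF that] by (intro exI[of _ "Suc (card A)"]) simp
  moreover have "\<forall>K. subgroup K G \<and> K \<subseteq> A \<and> phi ` K = K \<longrightarrow> K \<subseteq> core"
    using core_maximal by blast
  ultimately show ?thesis
    unfolding hnn_core_eq_core
    using core_subgroup phi_image_core hnn_emb_core core_eq_phi_defined by (intro conjI) simp_all
qed

end
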